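(* Consider the delayed online learning protocol of the context. Assume that $\|g_t\|_*\le G$ for all $t$ and that the sequence of active feedback sets is non-decreasing, $\mathcal S_t\subset\mathcal S_{t+1}$. Let DDA be run with \[\eta_t=\min\Big(\eta_{t-1},\ \frac{r}{\sqrt{\widetilde L_t+G^2\nu_t}}\Big),\qquad \eta_0=+\infty,\] where $\nu_t=t+2\Lambda_t-|\mathcal S_t|-2|\mathcal B_t|$. Then for every $p\in\mathcal X$ with $h(p)\le r^2$, \[R_T(p)\le 2r\max_{1\le t\le T}\sqrt{\widetilde L_t+G^2\nu_t}\le 2r\min\Big(\max_{1\le t\le T}\sqrt{L_t+G^2\nu_t},\ G\sqrt{T+2\Lambda_T}\Big).\]
   Context: Let $\mathcal V$ be a finite-dimensional real vector space with norm $\|\cdot\|$ and dual norm $\|\cdot\|_*$, and $\mathcal X\subset\mathcal V$ closed convex. A regularizer $h:\mathcal V\to\mathbb R\cup\{+\infty\}$ is lower semicontinuous, $1$-strongly convex w.r.t. $\|\cdot\|$ on $\mathcal X$, with $\mathcal X\subset\operatorname{dom}h$, whose subdifferential admits a continuous selection, and $h\ge0$. Protocol: at each round $t=1,\dots,T$ one agent $i(t)$ is active, plays $x_t\in\mathcal X$, incurs $f_t(x_t)$ ($f_t$ convex, $\mathcal X\subset\operatorname{dom}\partial f_t$); a subgradient $g_t\in\partial f_t(x_t)$ is revealed later. $\mathcal S^i_t\subset\{1,\dots,t-1\}$: timestamps of subgradients available to agent $i$ at time $t$, nondecreasing in $t$; $\mathcal S_t=\mathcal S^{i(t)}_t$,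 $\mathcal U_t=\{1,\dots,t-1\}\setminus\mathcal S_t$. DDA: $x_t=\arg\min_{x\in\mathcal X}\{\sum_{s\in\mathcal S_t}\langle g_s,x\rangle+h(x)/\eta_t\}$. Regret: $R_T(p)=\sum_tf_t(x_t)-\sum_tf_t(p)$. Lag: $L_t=\sum_{s=1}^t\big(\|g_s\|_*^2+2\|g_s\|_*\sum_{q\in\mathcal U_s}\|g_q\|_*\big)$. Cumulative unavailability: $\Lambda_t=\sum_{s=1}^t|\mathcal U_s|$. Arrival order: fix a permutation $\sigma$ of $\{1,\dots,T\}$ with $\mathcal S_t=\{\sigma(1),\dots,\sigma(|\mathcal S_t|)\}$ for all $t$; $\mathcal R_t=\{\sigma(1),\dots,\sigma(\sigma^{-1}(t)-1)\}$. Then $\widetilde L_t=\sum_{s\in\mathcal S_t}\big(\|g_s\|_*^2+2\|g_s\|_*\sum_{q\in\mathcal R_s\setminus\mathcal S_s}\|g_q\|_*\big)$, and $\mathcal B_t$ is the set of unordered pairs $\{s,q\}$ of distinct elements with $s\in\mathcal S_t$ and $q\in\mathcal R_s\setminus\mathcal S_s$. *)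

theory Defs
  imports "HOL-Analysis.Analysis"
begin

text \<open>The finite-dimensional real vector space V is modelled by a type of class
  euclidean_space; its dual is identified with V through the inner product.
  The (arbitrary) norm on V is an explicit function nrm.\<close>

definition is_norm :: "('a::real_vector \<Rightarrow> real) \<Rightarrow> bool" where
  "is_norm nrm \<longleftrightarrow>
     (\<forall>x. 0 \<le> nrm x) \<and> (\<forall>x. nrm x = 0 \<longleftrightarrow> x = 0) \<and>
     (\<forall>c x. nrm (c *\<^sub>R x) = \<bar>c\<bar> * nrm x) \<and>
     (\<forall>x y. nrm (x + y) \<le> nrm x + nrm y)"

definition dual_norm :: "('a::euclidean_space \<Rightarrow> real) \<Rightarrow> 'a \<Rightarrow> real" where
  "dual_norm nrm g = Sup {g \<bullet> x | x. nrm x \<le> 1}"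

definition subdiff :: "('a::euclidean_space \<Rightarrow> ereal) \<Rightarrow> 'a \<Rightarrow> 'a set" where
  "subdiff f x = {g. f x \<noteq> \<infinity> \<and> (\<forall>y. f x + ereal (g \<bullet> (y - x)) \<le> f y)}"

definition proper_convex :: "('a::real_vector \<Rightarrow> ereal) \<Rightarrow> bool" where
  "proper_convex f \<longleftrightarrow> (\<forall>x. f x \<noteq> -\<infinity>) \<and>
     (\<forall>x y u. 0 \<le> u \<and> u \<le> 1 \<longrightarrow>
        f (u *\<^sub>R x + (1 - u) *\<^sub>R y) \<le> ereal u * f x + ereal (1 - u) * f y)"

definition lower_semicont :: "('a::topological_space \<Rightarrow> ereal) \<Rightarrow> bool" where
  "lower_semicont h \<longleftrightarrow> (\<forall>x. h x \<le> Liminf (at x) h)"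

definition strongly_convex_on :: "('a::real_vector \<Rightarrow> real) \<Rightarrow> 'a set \<Rightarrow> ('a \<Rightarrow> ereal) \<Rightarrow> bool" where
  "strongly_convex_on nrm X h \<longleftrightarrow>
     (\<forall>x\<in>X. \<forall>y\<in>X. \<forall>u. 0 \<le> u \<and> u \<le> 1 \<longrightarrow>
        h (u *\<^sub>R x + (1 - u) *\<^sub>R y) \<le>
          ereal u * h x + ereal (1 - u) * h y - ereal (u * (1 - u) / 2 * (nrm (x - y))\<^sup>2))"

definition has_continuous_subgrad_selection :: "('a::euclidean_space \<Rightarrow> ereal) \<Rightarrow> bool" where
  "has_continuous_subgrad_selection h \<longleftrightarrow>
     (\<exists>\<phi>. continuous_on {x. subdiff h x \<noteq> {}} \<phi> \<and>
          (\<forall>x. subdiff h x \<noteq> {} \<longrightarrow> \<phi> x \<in> subdiff h x))"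

text \<open>Protocol quantities. S t = available timestamps at time t, g s = subgradients,
  sigma = arrival order (permutation of {1..T}).\<close>

definition unavail :: "(nat \<Rightarrow> nat set) \<Rightarrow> nat \<Rightarrow> nat set" where
  "unavail S t = {1..<t} - S t"

definition lag :: "('a::euclidean_space \<Rightarrow> real) \<Rightarrow> (nat \<Rightarrow> 'a) \<Rightarrow> (nat \<Rightarrow> nat set) \<Rightarrow> nat \<Rightarrow> real" where
  "lag nrm g S t = (\<Sum>s=1..t. (dual_norm nrm (g s))\<^sup>2
       + 2 * dual_norm nrm (g s) * (\<Sum>q\<in>unavail S s. dual_norm nrm (g q)))"

definition cum_unavail :: "(nat \<Rightarrow> nat set) \<Rightarrow> nat \<Rightarrow> nat" where
  "cum_unavail S t = (\<Sum>s=1..t. card (unavail S s))"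

definition arrived_before :: "nat \<Rightarrow> (nat \<Rightarrow> nat) \<Rightarrow> nat \<Rightarrow> nat set" where
  "arrived_before T \<sigma> t = \<sigma> ` {1..<inv_into {1..T} \<sigma> t}"

definition lag_tilde :: "nat \<Rightarrow> (nat \<Rightarrow> nat) \<Rightarrow> ('a::euclidean_space \<Rightarrow> real) \<Rightarrow> (nat \<Rightarrow> 'a)
    \<Rightarrow> (nat \<Rightarrow> nat set) \<Rightarrow> nat \<Rightarrow> real" where
  "lag_tilde T \<sigma> nrm g S t = (\<Sum>s\<in>S t. (dual_norm nrm (g s))\<^sup>2
       + 2 * dual_norm nrm (g s) * (\<Sum>q\<in>arrived_before T \<sigma> s - S s. dual_norm nrm (g q)))"

definition pairs_B :: "nat \<Rightarrow> (nat \<Rightarrow> nat) \<Rightarrow> (nat \<Rightarrow> nat set) \<Rightarrow> nat \<Rightarrow> nat set set" where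
  "pairs_B T \<sigma> S t = {{s, q} | s q. s \<in> S t \<and> q \<in> arrived_before T \<sigma> s - S s \<and> s \<noteq> q}"

definition nu :: "nat \<Rightarrow> (nat \<Rightarrow> nat) \<Rightarrow> (nat \<Rightarrow> nat set) \<Rightarrow> nat \<Rightarrow> real" where
  "nu T \<sigma> S t = real t + 2 * real (cum_unavail S t) - real (card (S t))
                 - 2 * real (card (pairs_B T \<sigma> S t))"

end

theory Submission
  imports Defs
begin

text \<open>A minimiser of a strongly convex objective moves only a little under a linear
  perturbation. At round \<open>t\<close> DDA minimises with the gradients in \<open>S t\<close> only; comparing it with the
  leader that uses all gradients up to \<open>t - 1\<close>, the missing ones act as such a perturbation, and
  summing the resulting be-the-leader inequalities bounds the regret by
  \<open>h p / \<eta> T + \<Sum>t. \<eta> t * (\<parallel>g t\<parallel>\<^sup>2 / 2 + \<parallel>g t\<parallel> * \<Sum>q\<in>U t. \<parallel>g q\<parallel>)\<close>. The step sizes satisfy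
  \<open>\<eta> t \<le> r / sqrt (L t)\<close> because \<open>L t \<le> L~ t + G\<^sup>2 * \<nu> t\<close>, so the second term telescopes to
  at most \<open>r * sqrt (L T)\<close>, while \<open>h p \<le> r\<^sup>2\<close> and \<open>\<eta> T \<ge> r / max\<^sub>t sqrt (L~ t + G\<^sup>2 * \<nu> t)\<close>
  bound the first term.

  The comparison of \<open>L~\<close>, \<open>L\<close> and the worst case is combinatorial: sorting the pairs \<open>(s, q)\<close>
  behind \<open>B t\<close> embeds them into the pairs \<open>(s, q)\<close> with \<open>q \<in> U s\<close> that make up \<open>L t\<close>, and every
  pair or timestamp not hit contributes at most \<open>G\<^sup>2\<close>.\<close>

section \<open>Norms and dual norms\<close>

lemma is_norm_nonneg: "is_norm nrm \<Longrightarrow> 0 \<le> nrm x"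
  by (simp add: is_norm_def)

lemma is_norm_zero: "is_norm nrm \<Longrightarrow> nrm 0 = 0"
  by (simp add: is_norm_def)

lemma is_norm_eq_zero_iff: "is_norm nrm \<Longrightarrow> nrm x = 0 \<longleftrightarrow> x = 0"
  by (simp add: is_norm_def)

lemma is_norm_scaleR: "is_norm nrm \<Longrightarrow> nrm (c *\<^sub>R x) = \<bar>c\<bar> * nrm x"
  by (simp add: is_norm_def)

lemma is_norm_triangle: "is_norm nrm \<Longrightarrow> nrm (x + y) \<le> nrm x + nrm y"
  by (simp add: is_norm_def)

lemma is_norm_minus_commute: "is_norm nrm \<Longrightarrow> nrm (x - y) = nrm (y - x)"
  using is_norm_scaleR[of nrm "-1" "x - y"] by simp

lemma is_norm_sum_le: "is_norm nrm \<Longrightarrow> nrm (sum f A) \<le> (\<Sum>a\<in>A. nrm (f a))"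
proof (induction A rule: infinite_finite_induct)
  case (insert a A)
  then show ?case
    using is_norm_triangle[OF insert.prems, of "f a" "sum f A"] by simp
qed (simp_all add: is_norm_zero)

lemma is_norm_le_norm:
  fixes nrm :: "'a::euclidean_space \<Rightarrow> real"
  assumes N: "is_norm nrm"
  shows "nrm x \<le> (\<Sum>b\<in>Basis. nrm b) * norm x"
proof -
  have "nrm x = nrm (\<Sum>b\<in>Basis. (x \<bullet> b) *\<^sub>R b)"
    by (simp add: euclidean_representation)
  also have "\<dots> \<le> (\<Sum>b\<in>Basis. nrm ((x \<bullet> b) *\<^sub>R b))"
    by (rule is_norm_sum_le[OF N])
  also have "\<dots> = (\<Sum>b\<in>Basis. \<bar>x \<bullet> b\<bar> * nrm b)"
    by (simp add: is_norm_scaleR[OF N])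
  also have "\<dots> \<le> (\<Sum>b\<in>Basis. norm x * nrm b)"
    by (intro sum_mono mult_right_mono) (auto simp: Basis_le_norm is_norm_nonneg[OF N])
  finally show ?thesis
    by (simp add: sum_distrib_left mult.commute)
qed

text \<open>By compactness of the Euclidean unit sphere.\<close>

lemma is_norm_ge_norm:
  fixes nrm :: "'a::euclidean_space \<Rightarrow> real"
  assumes N: "is_norm nrm"
  obtains m where "0 < m" "\<And>x. m * norm x \<le> nrm x"
proof -
  define M where "M = (\<Sum>b\<in>Basis. nrm (b::'a))"
  have "lipschitz_on M UNIV nrm"
  proof (rule lipschitz_onI)
    fix x y :: 'a
    have "dist (nrm x) (nrm y) \<le> nrm (x - y)"
      using is_norm_triangle[OF N, of y "x - y"] is_norm_triangle[OF N, of x "y - x"]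
        is_norm_minus_commute[OF N, of x y]
      by (simp add: dist_real_def abs_le_iff)
    also have "\<dots> \<le> M * dist x y"
      using is_norm_le_norm[OF N, of "x - y"] by (simp add: M_def dist_norm)
    finally show "dist (nrm x) (nrm y) \<le> M * dist x y" .
  qed (simp add: M_def sum_nonneg is_norm_nonneg[OF N])
  then have "continuous_on (sphere 0 1) nrm"
    using lipschitz_on_continuous_on continuous_on_subset by blast
  moreover obtain b :: 'a where "b \<in> Basis"
    using nonempty_Basis by blast
  then have "sphere (0::'a) 1 \<noteq> {}"
    by (metis mem_sphere_0 norm_Basis empty_iff)
  ultimately obtain x0 where x0: "x0 \<in> sphere 0 1" "\<And>y. y \<in> sphere 0 1 \<Longrightarrow> nrm x0 \<le> nrm y"
    using continuous_attains_inf[OF compact_sphere] by blast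
  show ?thesis
  proof
    show "0 < nrm x0"
      using x0(1) is_norm_nonneg[OF N, of x0] is_norm_eq_zero_iff[OF N, of x0] by auto
    show "nrm x0 * norm x \<le> nrm x" for x
    proof (cases "x = 0")
      case False
      then have "nrm x0 \<le> nrm ((1 / norm x) *\<^sub>R x)"
        by (intro x0(2)) simp
      then show ?thesis
        using False by (simp add: is_norm_scaleR[OF N] field_simps)
    qed (simp add: is_norm_zero[OF N])
  qed
qed

lemma bdd_above_inner_unit_ball:
  fixes nrm :: "'a::euclidean_space \<Rightarrow> real"
  assumes N: "is_norm nrm"
  shows "bdd_above {g \<bullet> x | x. nrm x \<le> 1}"
proof -
  obtain m where m: "0 < m" "\<And>x. m * norm x \<le> nrm x"
    using is_norm_ge_norm[OF N] by blast
  have "g \<bullet> x \<le> norm g * (1 / m)" if "nrm x \<le> 1" for x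
  proof -
    have "norm x \<le> 1 / m"
      using m(2)[of x] that m(1) by (simp add: field_simps)
    then have "norm g * norm x \<le> norm g * (1 / m)"
      by (rule mult_left_mono) simp
    then show ?thesis
      using norm_cauchy_schwarz[of g x] by linarith
  qed
  then show ?thesis
    by (intro bdd_aboveI[of _ "norm g * (1 / m)"]) blast
qed

lemma dual_norm_nonneg:
  fixes nrm :: "'a::euclidean_space \<Rightarrow> real"
  assumes "is_norm nrm"
  shows "0 \<le> dual_norm nrm g"
proof -
  have "g \<bullet> 0 \<in> {g \<bullet> x | x. nrm x \<le> 1}"
    by (intro CollectI exI[of _ 0]) (simp add: is_norm_zero[OF assms])
  then show ?thesis
    unfolding dual_norm_def by (rule cSup_upper2) (simp_all add: bdd_above_inner_unit_ball[OF assms])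
qed

lemma inner_le_dual_norm:
  fixes nrm :: "'a::euclidean_space \<Rightarrow> real"
  assumes N: "is_norm nrm"
  shows "g \<bullet> x \<le> dual_norm nrm g * nrm x"
proof (cases "x = 0")
  case False
  then have pos: "0 < nrm x"
    using is_norm_nonneg[OF N, of x] is_norm_eq_zero_iff[OF N, of x] by linarith
  have "g \<bullet> ((1 / nrm x) *\<^sub>R x) \<in> {g \<bullet> x | x. nrm x \<le> 1}"
    using pos by (intro CollectI exI[of _ "(1 / nrm x) *\<^sub>R x"]) (simp add: is_norm_scaleR[OF N])
  then have "g \<bullet> ((1 / nrm x) *\<^sub>R x) \<le> dual_norm nrm g"
    unfolding dual_norm_def by (rule cSup_upper) (rule bdd_above_inner_unit_ball[OF N])
  then show ?thesis
    using pos by (simp add: field_simps)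
qed (simp add: is_norm_zero[OF N])

lemma inner_nonpos_of_dual_norm_nonpos:
  fixes nrm :: "'a::euclidean_space \<Rightarrow> real"
  assumes "is_norm nrm" and "dual_norm nrm g \<le> 0"
  shows "g \<bullet> v \<le> 0"
proof -
  have "dual_norm nrm g = 0"
    using assms dual_norm_nonneg[OF assms(1), of g] by linarith
  then show ?thesis
    using inner_le_dual_norm[OF assms(1), of g v] by simp
qed

section \<open>Minimisers of strongly convex objectives\<close>

definition strongly_convex_mod_on :: "('a::real_vector \<Rightarrow> real) \<Rightarrow> real \<Rightarrow> 'a set \<Rightarrow> ('a \<Rightarrow> real) \<Rightarrow> bool" where
  "strongly_convex_mod_on nrm \<mu> X F \<longleftrightarrow>
     (\<forall>x\<in>X. \<forall>y\<in>X. \<forall>u. 0 \<le> u \<and> u \<le> 1 \<longrightarrow>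
        F (u *\<^sub>R x + (1 - u) *\<^sub>R y) \<le> u * F x + (1 - u) * F y - \<mu> * u * (1 - u) / 2 * (nrm (x - y))\<^sup>2)"

lemma strongly_convex_mod_onD:
  "strongly_convex_mod_on nrm \<mu> X F \<Longrightarrow> x \<in> X \<Longrightarrow> y \<in> X \<Longrightarrow> 0 \<le> u \<Longrightarrow> u \<le> 1 \<Longrightarrow>
    F (u *\<^sub>R x + (1 - u) *\<^sub>R y) \<le> u * F x + (1 - u) * F y - \<mu> * u * (1 - u) / 2 * (nrm (x - y))\<^sup>2"
  unfolding strongly_convex_mod_on_def by blast

lemma strongly_convex_on_imp_mod_on:
  assumes "strongly_convex_on nrm X h" "convex X" "\<And>y. y \<in> X \<Longrightarrow> h y = ereal (H y)"
  shows "strongly_convex_mod_on nrm 1 X H"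
  unfolding strongly_convex_mod_on_def
proof (intro ballI allI impI)
  fix x y and u :: real
  assume x: "x \<in> X" and y: "y \<in> X" and u: "0 \<le> u \<and> u \<le> 1"
  then have "u *\<^sub>R x + (1 - u) *\<^sub>R y \<in> X"
    using \<open>convex X\<close> by (simp add: convex_def)
  then show "H (u *\<^sub>R x + (1 - u) *\<^sub>R y) \<le> u * H x + (1 - u) * H y - 1 * u * (1 - u) / 2 * (nrm (x - y))\<^sup>2"
    using assms(1) x y u unfolding strongly_convex_on_def by (force simp: assms(3))
qed

lemma strongly_convex_mod_on_add_inner:
  "strongly_convex_mod_on nrm \<mu> X F \<Longrightarrow> strongly_convex_mod_on nrm \<mu> X (\<lambda>y. F y + d \<bullet> y)"
  unfolding strongly_convex_mod_on_def
  by (force simp: inner_add_right algebra_simps)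

lemma strongly_convex_mod_on_dda_objective:
  assumes H: "strongly_convex_mod_on nrm 1 X H" and e: "0 < e"
  shows "strongly_convex_mod_on nrm (1 / e) X (\<lambda>y. c \<bullet> y + H y / e)"
  unfolding strongly_convex_mod_on_def
proof (intro ballI allI impI)
  fix x y and u :: real
  assume x: "x \<in> X" and y: "y \<in> X" and u: "0 \<le> u \<and> u \<le> 1"
  have "H (u *\<^sub>R x + (1 - u) *\<^sub>R y) / e \<le> (u * H x + (1 - u) * H y - 1 * u * (1 - u) / 2 * (nrm (x - y))\<^sup>2) / e"
    using strongly_convex_mod_onD[OF H x y] u e by (simp add: divide_right_mono)
  then show "c \<bullet> (u *\<^sub>R x + (1 - u) *\<^sub>R y) + H (u *\<^sub>R x + (1 - u) *\<^sub>R y) / e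
      \<le> u * (c \<bullet> x + H x / e) + (1 - u) * (c \<bullet> y + H y / e) - 1 / e * u * (1 - u) / 2 * (nrm (x - y))\<^sup>2"
    by (simp add: inner_add_right diff_divide_distrib add_divide_distrib algebra_simps)
qed

lemma strongly_convex_minimizer_growth:
  assumes X: "convex X" and F: "strongly_convex_mod_on nrm \<mu> X F" and \<mu>: "0 \<le> \<mu>"
    and z: "z \<in> X" and z_min: "\<And>y. y \<in> X \<Longrightarrow> F z \<le> F y" and x: "x \<in> X"
  shows "F z + \<mu> / 2 * (nrm (x - z))\<^sup>2 \<le> F x"
proof -
  define K where "K = \<mu> / 2 * (nrm (x - z))\<^sup>2"
  have "F z + K \<le> F x + u * K" if u: "u \<in> {0<..<1}" for u
  proof -
    have "F z \<le> F (u *\<^sub>R x + (1 - u) *\<^sub>R z)"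
      using X x z u by (intro z_min) (simp add: convex_def)
    also have "\<dots> \<le> u * F x + (1 - u) * F z - \<mu> * u * (1 - u) / 2 * (nrm (x - z))\<^sup>2"
      by (rule strongly_convex_mod_onD[OF F x z]) (use u in auto)
    also have "\<dots> = F z + u * ((F x + u * K) - (F z + K))"
      by (simp add: K_def field_simps)
    finally show ?thesis
      using u by (simp add: zero_le_mult_iff)
  qed
  then have ev: "eventually (\<lambda>u. F z + K \<le> F x + u * K) (at_right 0)"
    using eventually_at_right_real[of 0 1] by (auto elim: eventually_mono)
  have lim: "((\<lambda>u. F x + u * K) \<longlongrightarrow> F x + 0 * K) (at_right 0)"
    by (intro tendsto_intros)
  have "F z + K \<le> F x + 0 * K"
    by (rule tendsto_lowerbound[OF lim ev]) simp
  then show ?thesis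
    by (simp add: K_def)
qed

lemma mult_le_quadratic_penalty:
  fixes a d D \<mu> :: real
  assumes \<mu>: "0 < \<mu>"
  shows "a * d \<le> (\<mu> * d - D)\<^sup>2 / (2 * \<mu>) + (a\<^sup>2 / 2 + a * D) / \<mu>"
proof -
  have "(\<mu> * d - D)\<^sup>2 + (a\<^sup>2 + 2 * a * D) - a * d * (2 * \<mu>) = (\<mu> * d - D - a)\<^sup>2"
    by (simp add: power2_eq_square algebra_simps)
  then have "a * d * (2 * \<mu>) \<le> (\<mu> * d - D)\<^sup>2 + (a\<^sup>2 + 2 * a * D)"
    using zero_le_power2[of "\<mu> * d - D - a"] by linarith
  then have "a * d \<le> ((\<mu> * d - D)\<^sup>2 + (a\<^sup>2 + 2 * a * D)) / (2 * \<mu>)"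
    using \<mu> by (simp add: pos_le_divide_eq)
  also have "\<dots> = (\<mu> * d - D)\<^sup>2 / (2 * \<mu>) + (a\<^sup>2 / 2 + a * D) / \<mu>"
    using \<mu> by (simp add: field_simps)
  finally show ?thesis .
qed

text \<open>Moving from the minimiser \<open>z\<close> towards \<open>x\<close> by a distance \<open>D / \<mu>\<close> absorbs the linear
  perturbation \<open>\<delta>\<close> at the price of a quadratic term.\<close>

lemma strongly_convex_minimizer_perturb:
  fixes nrm :: "'a::euclidean_space \<Rightarrow> real"
  assumes N: "is_norm nrm" and X: "convex X" and F: "strongly_convex_mod_on nrm \<mu> X F" and \<mu>: "0 < \<mu>"
    and z: "z \<in> X" and z_min: "\<And>y. y \<in> X \<Longrightarrow> F z \<le> F y" and x: "x \<in> X"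
    and D: "0 \<le> D" "\<And>v. \<delta> \<bullet> v \<le> D * nrm v"
    and a: "0 \<le> a" "\<And>v. g \<bullet> v \<le> a * nrm v"
  shows "\<exists>w\<in>X. F w + \<delta> \<bullet> w \<le> F x + \<delta> \<bullet> x + g \<bullet> (x - z) + (a\<^sup>2 / 2 + a * D) / \<mu>"
proof -
  define d where "d = nrm (x - z)"
  have g_xz: "- (a * d) \<le> g \<bullet> (x - z)"
    using a(2)[of "z - x"] is_norm_minus_commute[OF N, of z x] by (simp add: d_def inner_diff_right)
  have a_D: "a * D / \<mu> \<le> (a\<^sup>2 / 2 + a * D) / \<mu>"
    using \<mu> by (simp add: divide_right_mono)
  show ?thesis
  proof (cases "\<mu> * d \<le> D")
    case True
    then have "d \<le> D / \<mu>"
      using \<mu> by (simp add: pos_le_divide_eq mult.commute)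
    then have "a * d \<le> a * D / \<mu>"
      using a(1) by (metis mult_left_mono times_divide_eq_right)
    then show ?thesis
      using x g_xz a_D by (intro bexI[of _ x]) simp_all
  next
    case False
    then have "0 < \<mu> * d"
      using D(1) by linarith
    then have d: "0 < d"
      using \<mu> by (simp add: zero_less_mult_iff)
    define u where "u = D / (\<mu> * d)"
    have u: "0 \<le> u" "u \<le> 1"
      using False d \<mu> D(1) by (simp_all add: u_def)
    define \<Phi> where "\<Phi> y = F y + \<delta> \<bullet> y" for y
    define w where "w = u *\<^sub>R x + (1 - u) *\<^sub>R z"
    have "w \<in> X"
      using X x z u by (simp add: w_def convex_def)
    have \<Phi>_w: "\<Phi> w \<le> u * \<Phi> x + (1 - u) * \<Phi> z - \<mu> * u * (1 - u) / 2 * d\<^sup>2"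
      using strongly_convex_mod_onD[OF strongly_convex_mod_on_add_inner[OF F] x z u]
      by (simp add: \<Phi>_def w_def d_def)
    have "\<delta> \<bullet> z - \<delta> \<bullet> x \<le> D * d"
      using D(2)[of "z - x"] is_norm_minus_commute[OF N, of z x] by (simp add: d_def inner_diff_right)
    then have \<Phi>_z: "\<Phi> z \<le> \<Phi> x + D * d - \<mu> / 2 * d\<^sup>2"
      using strongly_convex_minimizer_growth[OF X F _ z z_min x] \<mu> by (simp add: \<Phi>_def d_def)
    have "\<Phi> w \<le> u * \<Phi> x + (1 - u) * (\<Phi> x + D * d - \<mu> / 2 * d\<^sup>2) - \<mu> * u * (1 - u) / 2 * d\<^sup>2"
      using \<Phi>_w mult_left_mono[OF \<Phi>_z, of "1 - u"] u by linarith
    also have "\<dots> = \<Phi> x - (\<mu> * d - D)\<^sup>2 / (2 * \<mu>)"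
      using d \<mu> by (simp add: u_def field_simps power2_eq_square)
    also have "\<dots> \<le> \<Phi> x + g \<bullet> (x - z) + (a\<^sup>2 / 2 + a * D) / \<mu>"
      using mult_le_quadratic_penalty[OF \<mu>, of a d D] g_xz by linarith
    finally show ?thesis
      using \<open>w \<in> X\<close> by (auto simp: \<Phi>_def)
  qed
qed

section \<open>Adaptive step sizes\<close>

lemma div_sqrt_le_two_sqrt_diff:
  fixes L l :: real
  assumes "0 \<le> L" "0 \<le> l"
  shows "l / sqrt (L + l) \<le> 2 * (sqrt (L + l) - sqrt L)"
proof (cases "L + l = 0")
  case False
  then have pos: "0 < sqrt (L + l)"
    using assms by simp
  have "l = (sqrt (L + l) - sqrt L) * (sqrt (L + l) + sqrt L)"
    using assms by (simp add: algebra_simps)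
  also have "\<dots> \<le> (sqrt (L + l) - sqrt L) * (2 * sqrt (L + l))"
    using assms by (intro mult_left_mono) auto
  finally show ?thesis
    using pos by (simp add: field_simps)
qed (use assms in simp)

lemma sum_div_sqrt_partial_sums_le:
  fixes l :: "nat \<Rightarrow> real"
  assumes l: "\<And>j. 0 \<le> l j"
  shows "(\<Sum>j=1..n. l j / sqrt (\<Sum>i=1..j. l i)) \<le> 2 * sqrt (\<Sum>i=1..n. l i)"
proof (induction n)
  case (Suc n)
  have "0 \<le> (\<Sum>i=1..n. l i)"
    by (simp add: sum_nonneg l)
  have "(\<Sum>j=1..Suc n. l j / sqrt (\<Sum>i=1..j. l i))
      = (\<Sum>j=1..n. l j / sqrt (\<Sum>i=1..j. l i)) + l (Suc n) / sqrt ((\<Sum>i=1..n. l i) + l (Suc n))"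
    by simp
  also have "\<dots> \<le> 2 * sqrt (\<Sum>i=1..n. l i)
      + 2 * (sqrt ((\<Sum>i=1..n. l i) + l (Suc n)) - sqrt (\<Sum>i=1..n. l i))"
    using Suc.IH div_sqrt_le_two_sqrt_diff[OF \<open>0 \<le> (\<Sum>i=1..n. l i)\<close> l] by (rule add_mono)
  also have "\<dots> = 2 * sqrt (\<Sum>i=1..Suc n. l i)"
    by simp
  finally show ?case .
qed simp

lemma sum_mult_le_two_sqrt_sum:
  fixes e l :: "nat \<Rightarrow> real"
  assumes l: "\<And>j. 0 \<le> l j" and e: "\<And>t. t \<in> {1..n} \<Longrightarrow> e t * sqrt (\<Sum>i=1..t. l i) \<le> r"
    and r: "0 \<le> r"
  shows "(\<Sum>t=1..n. e t * l t) \<le> 2 * r * sqrt (\<Sum>i=1..n. l i)"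
proof -
  have "e t * l t \<le> r * (l t / sqrt (\<Sum>i=1..t. l i))" if t: "t \<in> {1..n}" for t
  proof (cases "(\<Sum>i=1..t. l i) = 0")
    case True
    then have "l t = 0"
      using member_le_sum[of t "{1..t}" l] l t by (simp add: order_antisym)
    then show ?thesis
      by simp
  next
    case False
    then have pos: "0 < sqrt (\<Sum>i=1..t. l i)"
      using l by (simp add: sum_nonneg order_less_le)
    then have "e t * l t = (e t * sqrt (\<Sum>i=1..t. l i)) * (l t / sqrt (\<Sum>i=1..t. l i))"
      by simp
    also have "\<dots> \<le> r * (l t / sqrt (\<Sum>i=1..t. l i))"
      using e[OF t] l[of t] pos by (intro mult_right_mono) simp_all
    finally show ?thesis .
  qed
  then have "(\<Sum>t=1..n. e t * l t) \<le> (\<Sum>t=1..n. r * (l t / sqrt (\<Sum>i=1..t. l i)))"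
    by (rule sum_mono)
  also have "\<dots> = r * (\<Sum>t=1..n. l t / sqrt (\<Sum>i=1..t. l i))"
    by (simp add: sum_distrib_left)
  also have "\<dots> \<le> r * (2 * sqrt (\<Sum>i=1..n. l i))"
    using sum_div_sqrt_partial_sums_le[OF l] r by (rule mult_left_mono)
  finally show ?thesis
    by simp
qed

lemma running_min_ereal:
  fixes \<eta> :: "nat \<Rightarrow> ereal" and b :: "nat \<Rightarrow> real"
  assumes \<eta>_0: "\<eta> 0 = \<infinity>" and \<eta>_rec: "\<And>t. t \<in> {1..T} \<Longrightarrow> \<eta> t = min (\<eta> (t - 1)) (ereal (b t))"
    and t: "t \<in> {1..T}"
  shows "\<eta> t = ereal (MIN s\<in>{1..t}. b s)"
proof -
  have "1 \<le> t" "t \<le> T"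
    using t by auto
  then show ?thesis
  proof (induction t rule: nat_induct_at_least)
    case base
    then show ?case
      using \<eta>_rec[of 1] \<eta>_0 by simp
  next
    case (Suc n)
    then have "\<eta> (Suc n) = min (ereal (MIN s\<in>{1..n}. b s)) (ereal (b (Suc n)))"
      using \<eta>_rec[of "Suc n"] by simp
    also have "\<dots> = ereal (MIN s\<in>{1..Suc n}. b s)"
      using Suc.hyps by (simp add: atLeastAtMostSuc_conv min.commute)
    finally show ?case .
  qed
qed

lemma running_min_step_sizes:
  fixes q :: "nat \<Rightarrow> real"
  assumes q: "\<forall>t\<in>{1..T}. 0 < q t" and r: "0 < r"
    and e: "\<And>t. e t = (MIN s\<in>{1..t}. r / sqrt (q s))"
  shows "t \<in> {1..T} \<Longrightarrow> 0 < e t"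
    and "t \<in> {1..T} \<Longrightarrow> e t * sqrt (q t) \<le> r"
    and "1 \<le> t \<Longrightarrow> e (Suc t) \<le> e t"
    and "1 \<le> T \<Longrightarrow> r \<le> e T * (MAX t\<in>{1..T}. sqrt (q t))"
proof -
  show "0 < e t" if "t \<in> {1..T}"
    using that q r by (auto simp: e Min_gr_iff)
  show "e t * sqrt (q t) \<le> r" if t: "t \<in> {1..T}"
  proof -
    have "e t \<le> r / sqrt (q t)"
      using t unfolding e by (intro Min_le) auto
    then show ?thesis
      using q t by (simp add: pos_le_divide_eq)
  qed
  show "e (Suc t) \<le> e t" if "1 \<le> t"
    unfolding e using that by (intro Min_antimono image_mono) auto
  show "r \<le> e T * (MAX t\<in>{1..T}. sqrt (q t))" if T: "1 \<le> T"
  proof -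
    have "e T \<in> (\<lambda>s. r / sqrt (q s)) ` {1..T}"
      unfolding e using T by (intro Min_in) auto
    then obtain s where s: "s \<in> {1..T}" "e T = r / sqrt (q s)"
      by blast
    have "0 < q s"
      using q s(1) by blast
    then have e_T: "0 < e T"
      using s(2) r by simp
    have "r = e T * sqrt (q s)"
      using s(2) \<open>0 < q s\<close> by simp
    also have "\<dots> \<le> e T * (MAX t\<in>{1..T}. sqrt (q t))"
      using s(1) e_T by (intro mult_left_mono Max_ge) auto
    finally show ?thesis .
  qed
qed

section \<open>Delayed dual averaging\<close>

lemma real_of_ereal_diff_le_inner_subgradient:
  assumes "proper_convex f" and "g \<in> subdiff f x" and "subdiff f p \<noteq> {}"
  shows "real_of_ereal (f x) - real_of_ereal (f p) \<le> g \<bullet> (x - p)"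
proof -
  have "f x + ereal (g \<bullet> (p - x)) \<le> f p" and "f x \<noteq> \<infinity>" "f p \<noteq> \<infinity>"
    using assms(2,3) by (auto simp: subdiff_def)
  moreover have "f x \<noteq> -\<infinity>" "f p \<noteq> -\<infinity>"
    using assms(1) by (auto simp: proper_convex_def)
  ultimately show ?thesis
    by (cases "f x"; cases "f p") (auto simp: inner_diff_right)
qed

lemma delayed_dda_round:
  fixes nrm :: "'a::euclidean_space \<Rightarrow> real" and g :: "nat \<Rightarrow> 'a"
  assumes N: "is_norm nrm" and X: "convex X" and H: "strongly_convex_mod_on nrm 1 X H"
    and e: "0 < e" and s: "1 \<le> s" and S: "S s \<subseteq> {1..<s}"
    and x: "x \<in> X"
    and x_min: "\<And>y. y \<in> X \<Longrightarrow> (\<Sum>j\<in>S s. g j) \<bullet> x + H x / e \<le> (\<Sum>j\<in>S s. g j) \<bullet> y + H y / e"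
    and past: "\<And>y. y \<in> X \<Longrightarrow> C \<le> (\<Sum>j=1..<s. g j) \<bullet> y + H y / e"
    and y: "y \<in> X"
  shows "C + g s \<bullet> x - e * ((dual_norm nrm (g s))\<^sup>2 / 2
            + dual_norm nrm (g s) * (\<Sum>q\<in>unavail S s. dual_norm nrm (g q)))
         \<le> (\<Sum>j=1..s. g j) \<bullet> y + H y / e"
proof -
  define a where "a = dual_norm nrm (g s)"
  define D where "D = (\<Sum>q\<in>unavail S s. dual_norm nrm (g q))"
  define \<delta> where "\<delta> = (\<Sum>j\<in>unavail S s. g j)"
  define F where "F y = (\<Sum>j\<in>S s. g j) \<bullet> y + H y / e" for y
  have past_split: "(\<Sum>j=1..<s. g j) = (\<Sum>j\<in>S s. g j) + \<delta>"
    using sum.subset_diff[OF S, of g] by (simp add: \<delta>_def unavail_def add.commute)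
  have F: "strongly_convex_mod_on nrm (1 / e) X F"
    unfolding F_def[abs_def] by (rule strongly_convex_mod_on_dda_objective[OF H e])
  have x_min': "F x \<le> F y" if "y \<in> X" for y
    using x_min[OF that] by (simp add: F_def)
  have D: "0 \<le> D"
    by (simp add: D_def sum_nonneg dual_norm_nonneg[OF N])
  have \<delta>_le: "\<delta> \<bullet> v \<le> D * nrm v" for v
  proof -
    have "\<delta> \<bullet> v = (\<Sum>j\<in>unavail S s. g j \<bullet> v)"
      by (simp add: \<delta>_def inner_sum_left)
    also have "\<dots> \<le> (\<Sum>j\<in>unavail S s. dual_norm nrm (g j) * nrm v)"
      by (intro sum_mono inner_le_dual_norm[OF N])
    finally show ?thesis
      by (simp add: D_def sum_distrib_right)
  qed
  have a: "0 \<le> a"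
    by (simp add: a_def dual_norm_nonneg[OF N])
  from strongly_convex_minimizer_perturb[OF N X F _ x x_min' y D \<delta>_le a
      inner_le_dual_norm[OF N, of "g s", folded a_def]] e
  obtain w where "w \<in> X" and w: "F w + \<delta> \<bullet> w \<le> F y + \<delta> \<bullet> y + g s \<bullet> (y - x) + (a\<^sup>2 / 2 + a * D) / (1 / e)"
    by auto
  have "C \<le> F w + \<delta> \<bullet> w"
    using past[OF \<open>w \<in> X\<close>] unfolding past_split by (simp add: F_def inner_add_left)
  moreover have "F y + \<delta> \<bullet> y = (\<Sum>j=1..<s. g j) \<bullet> y + H y / e"
    unfolding past_split by (simp add: F_def inner_add_left)
  moreover have "(a\<^sup>2 / 2 + a * D) / (1 / e) = e * (a\<^sup>2 / 2 + a * D)"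
    by simp
  moreover have "(\<Sum>j=1..s. g j) \<bullet> y = (\<Sum>j=1..<s. g j) \<bullet> y + g s \<bullet> y"
    using s by (metis atLeastLessThanSuc_atLeastAtMost sum.atLeastLessThan_Suc inner_add_left)
  moreover have "g s \<bullet> (y - x) = g s \<bullet> y - g s \<bullet> x"
    by (rule inner_diff_right)
  ultimately show ?thesis
    unfolding a_def[symmetric] D_def[symmetric] using w by linarith
qed

locale delayed_dda =
  fixes nrm :: "'a::euclidean_space \<Rightarrow> real" and X :: "'a set" and H :: "'a \<Rightarrow> real"
    and T :: nat and e :: "nat \<Rightarrow> real" and S :: "nat \<Rightarrow> nat set" and g x :: "nat \<Rightarrow> 'a"
  assumes norm: "is_norm nrm" and convex: "convex X" and strongly_convex: "strongly_convex_mod_on nrm 1 X H"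
    and H_nonneg: "\<And>y. y \<in> X \<Longrightarrow> 0 \<le> H y"
    and e_pos: "\<And>t. t \<in> {1..T} \<Longrightarrow> 0 < e t"
    and e_antimono: "\<And>t. 1 \<le> t \<Longrightarrow> t < T \<Longrightarrow> e (Suc t) \<le> e t"
    and S_sub: "\<And>t. t \<in> {1..T} \<Longrightarrow> S t \<subseteq> {1..<t}"
    and x_mem: "\<And>t. t \<in> {1..T} \<Longrightarrow> x t \<in> X"
    and x_min: "\<And>t y. t \<in> {1..T} \<Longrightarrow> y \<in> X \<Longrightarrow>
      (\<Sum>s\<in>S t. g s) \<bullet> x t + H (x t) / e t \<le> (\<Sum>s\<in>S t. g s) \<bullet> y + H y / e t"
begin

lemma regret_le:
  assumes T: "1 \<le> T" and p: "p \<in> X"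
  shows "(\<Sum>t=1..T. g t \<bullet> (x t - p)) \<le> H p / e T
    + (\<Sum>t=1..T. e t * ((dual_norm nrm (g t))\<^sup>2 / 2
         + dual_norm nrm (g t) * (\<Sum>q\<in>unavail S t. dual_norm nrm (g q))))"
proof -
  define c where "c t = e t * ((dual_norm nrm (g t))\<^sup>2 / 2
         + dual_norm nrm (g t) * (\<Sum>q\<in>unavail S t. dual_norm nrm (g q)))" for t
  \<comment> \<open>Be-the-leader: the losses played, corrected by the stability terms \<open>c\<close>, stay below the
    regularised loss of every fixed point.\<close>
  have "(\<Sum>j=1..k. g j \<bullet> x j - c j) \<le> (\<Sum>j=1..k. g j) \<bullet> y + H y / e k"
    if "1 \<le> k" "k \<le> T" "y \<in> X" for k y
    using that
  proof (induction k arbitrary: y rule: nat_induct_at_least)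
    case base
    have one: "1 \<in> {1..T}"
      using T by simp
    have "0 \<le> (\<Sum>j=1..<1. g j) \<bullet> y' + H y' / e 1" if "y' \<in> X" for y'
      using H_nonneg[OF that] e_pos[of 1] T by simp
    from delayed_dda_round[where S = S and s = 1, OF norm convex strongly_convex e_pos[OF one] _
        S_sub[OF one] x_mem[OF one] x_min[OF one] this base(2)]
    show ?case
      by (simp add: c_def)
  next
    case (Suc k)
    have k: "Suc k \<in> {1..T}"
      using Suc by simp
    have "(\<Sum>j=1..k. g j \<bullet> x j - c j) \<le> (\<Sum>j=1..<Suc k. g j) \<bullet> y' + H y' / e (Suc k)"
      if "y' \<in> X" for y'
    proof -
      have "H y' / e k \<le> H y' / e (Suc k)"
        using H_nonneg[OF that] e_pos[OF k] e_antimono[of k] Suc by (intro divide_left_mono) auto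
      then show ?thesis
        using Suc.IH[OF _ that] Suc by (simp add: atLeastLessThanSuc_atLeastAtMost)
    qed
    from delayed_dda_round[where S = S and s = "Suc k", OF norm convex strongly_convex e_pos[OF k] _
        S_sub[OF k] x_mem[OF k] x_min[OF k] this Suc(4)]
    show ?case
      by (simp add: c_def)
  qed
  from this[OF T order_refl p]
  have "(\<Sum>t=1..T. g t \<bullet> (x t - p)) \<le> H p / e T + (\<Sum>t=1..T. c t)"
    by (simp add: inner_diff_right inner_sum_left sum_subtractf)
  then show ?thesis
    by (simp add: c_def)
qed

lemma adaptive_regret_le:
  assumes T: "1 \<le> T" and p: "p \<in> X" and p_H: "H p \<le> r\<^sup>2"
    and e_lag: "\<And>t. t \<in> {1..T} \<Longrightarrow> e t * sqrt (lag nrm g S t) \<le> r"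
    and e_last: "r \<le> e T * M" and lag_last: "sqrt (lag nrm g S T) \<le> M"
  shows "(\<Sum>t=1..T. g t \<bullet> (x t - p)) \<le> 2 * r * M"
proof -
  define a where "a s = dual_norm nrm (g s)" for s
  define l where "l t = (a t)\<^sup>2 + 2 * a t * (\<Sum>q\<in>unavail S t. a q)" for t
  have l_nonneg: "0 \<le> l t" for t
    by (simp add: l_def a_def sum_nonneg dual_norm_nonneg[OF norm])
  have lag_l: "lag nrm g S t = (\<Sum>i=1..t. l i)" for t
    by (simp add: lag_def l_def a_def)
  have e_T: "0 < e T"
    using e_pos T by simp
  have "0 \<le> e T * sqrt (lag nrm g S T)"
    using e_T by (simp add: lag_l sum_nonneg l_nonneg)
  then have r: "0 \<le> r"
    using e_lag[of T] T by simp
  have "H p \<le> r * (e T * M)"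
    using p_H mult_left_mono[OF e_last r] by (simp add: power2_eq_square)
  then have "H p / e T \<le> r * M"
    using e_T by (simp add: pos_divide_le_eq mult_ac)
  moreover have "(\<Sum>t=1..T. e t * l t) \<le> 2 * r * M"
  proof -
    have "(\<Sum>t=1..T. e t * l t) \<le> 2 * r * sqrt (\<Sum>i=1..T. l i)"
      by (rule sum_mult_le_two_sqrt_sum[where l = l]) (use l_nonneg e_lag r in \<open>simp_all add: lag_l\<close>)
    also have "\<dots> \<le> 2 * r * M"
      using lag_last r by (simp add: lag_l mult_left_mono)
    finally show ?thesis .
  qed
  moreover have "(\<Sum>t=1..T. e t * ((a t)\<^sup>2 / 2 + a t * (\<Sum>q\<in>unavail S t. a q)))
      = (\<Sum>t=1..T. e t * l t) / 2"
    unfolding sum_divide_distrib by (intro sum.cong) (simp_all add: l_def field_simps)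
  ultimately show ?thesis
    using regret_le[OF T p] by (simp add: a_def)
qed

end

lemma delayed_dda_adaptive_regret_ereal:
  fixes nrm :: "'a::euclidean_space \<Rightarrow> real" and h :: "'a \<Rightarrow> ereal" and \<eta> :: "nat \<Rightarrow> ereal"
    and q :: "nat \<Rightarrow> real" and g x :: "nat \<Rightarrow> 'a"
  assumes N: "is_norm nrm" and X: "convex X" and h_sc: "strongly_convex_on nrm X h"
    and h_fin: "\<And>y. y \<in> X \<Longrightarrow> h y \<noteq> \<infinity>" and h_nonneg: "\<And>y. 0 \<le> h y"
    and T: "1 \<le> T" and S: "\<And>t. t \<in> {1..T} \<Longrightarrow> S t \<subseteq> {1..<t}"
    and q_pos: "\<And>t. t \<in> {1..T} \<Longrightarrow> 0 < q t" and lag_le: "\<And>t. t \<in> {1..T} \<Longrightarrow> lag nrm g S t \<le> q t"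
    and r: "0 < r" and \<eta>_0: "\<eta> 0 = \<infinity>"
    and \<eta>_rec: "\<And>t. t \<in> {1..T} \<Longrightarrow> \<eta> t = min (\<eta> (t - 1)) (ereal (r / sqrt (q t)))"
    and dda: "\<And>t. t \<in> {1..T} \<Longrightarrow> x t \<in> X \<and>
      (\<forall>y\<in>X. ereal (\<Sum>s\<in>S t. g s \<bullet> x t) + h (x t) / \<eta> t \<le> ereal (\<Sum>s\<in>S t. g s \<bullet> y) + h y / \<eta> t)"
    and p: "p \<in> X" and p_h: "h p \<le> ereal (r\<^sup>2)"
  shows "(\<Sum>t=1..T. g t \<bullet> (x t - p)) \<le> 2 * r * (MAX t\<in>{1..T}. sqrt (q t))"
proof -
  define M where "M = (MAX t\<in>{1..T}. sqrt (q t))"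
  define e where "e t = (MIN s\<in>{1..t}. r / sqrt (q s))" for t
  define H where "H y = real_of_ereal (h y)" for y
  have "\<forall>t\<in>{1..T}. 0 < q t"
    using q_pos by blast
  note e = running_min_step_sizes[OF this r e_def]
  have \<eta>_e: "\<eta> t = ereal (e t)" if "t \<in> {1..T}" for t
    unfolding e_def using running_min_ereal[of \<eta> T "\<lambda>t. r / sqrt (q t)", OF \<eta>_0 \<eta>_rec that] .
  have h_H: "h y = ereal (H y)" if "y \<in> X" for y
    using h_fin[OF that] h_nonneg[of y] by (cases "h y") (auto simp: H_def)
  have H_nonneg: "0 \<le> H y" if "y \<in> X" for y
    using h_nonneg[of y] h_H[OF that] by simp
  have x_min: "(\<Sum>s\<in>S t. g s) \<bullet> x t + H (x t) / e t \<le> (\<Sum>s\<in>S t. g s) \<bullet> y + H y / e t"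
    if t: "t \<in> {1..T}" and y: "y \<in> X" for t y
  proof -
    have "x t \<in> X" and
      "ereal (\<Sum>s\<in>S t. g s \<bullet> x t) + h (x t) / \<eta> t \<le> ereal (\<Sum>s\<in>S t. g s \<bullet> y) + h y / \<eta> t"
      using dda[OF t] y by blast+
    then show ?thesis
      using y e(1)[OF t] by (simp add: \<eta>_e[OF t] h_H inner_sum_left)
  qed
  interpret delayed_dda nrm X H T e S g x
    using N X strongly_convex_on_imp_mod_on[OF h_sc X h_H] H_nonneg e(1,3) S dda x_min
    by unfold_locales auto
  have "e t * sqrt (lag nrm g S t) \<le> r" if "t \<in> {1..T}" for t
    using e(2)[OF that] mult_left_mono[OF real_sqrt_le_mono[OF lag_le[OF that]] less_imp_le[OF e(1)[OF that]]]
    by linarith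
  moreover have "sqrt (lag nrm g S T) \<le> M"
  proof -
    have "sqrt (lag nrm g S T) \<le> sqrt (q T)"
      using lag_le[of T] T by simp
    also have "\<dots> \<le> M"
      unfolding M_def using T by (intro Max_ge) auto
    finally show ?thesis .
  qed
  moreover have "H p \<le> r\<^sup>2"
    using p_h h_H[OF p] by simp
  ultimately show ?thesis
    unfolding M_def[symmetric] using adaptive_regret_le[OF T p _ _ e(4)[OF T, folded M_def]] by blast
qed

section \<open>Late arrivals and the lag\<close>

lemma sum_inj_into_bounds:
  fixes f :: "'a \<Rightarrow> real"
  assumes B: "finite B" and inj: "inj_on \<phi> A" and into: "\<phi> ` A \<subseteq> B"
    and f_\<phi>: "\<And>x. x \<in> A \<Longrightarrow> f (\<phi> x) = f x"
    and f_nonneg: "\<forall>y\<in>B. 0 \<le> f y" and f_le: "\<forall>y\<in>B. f y \<le> c"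
  shows "sum f A \<le> sum f B"
    and "sum f B \<le> sum f A + c * (real (card B) - real (card A))"
    and "sum f A \<le> c * real (card A)"
proof -
  have A: "sum f A = sum f (\<phi> ` A)"
    unfolding sum.reindex[OF inj] by (rule sum.cong) (simp_all add: f_\<phi>)
  have card: "card (\<phi> ` A) = card A"
    using card_image[OF inj] .
  have split: "sum f B = sum f (\<phi> ` A) + sum f (B - \<phi> ` A)"
    using sum.subset_diff[OF into B] by (simp add: add.commute)
  have card_diff: "real (card (B - \<phi> ` A)) = real (card B) - real (card A)"
    using card_Diff_subset[OF finite_subset[OF into B] into] card_mono[OF B into] card
    by (simp add: of_nat_diff)
  have "0 \<le> sum f (B - \<phi> ` A)"
    by (rule sum_nonneg) (simp add: f_nonneg)
  then show "sum f A \<le> sum f B"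
    using split A by simp
  have "sum f (B - \<phi> ` A) \<le> real (card (B - \<phi> ` A)) * c"
    using f_le by (intro sum_bounded_above) auto
  then show "sum f B \<le> sum f A + c * (real (card B) - real (card A))"
    using split A card_diff by (simp add: mult.commute)
  have "sum f (\<phi> ` A) \<le> real (card (\<phi> ` A)) * c"
    using f_le into by (intro sum_bounded_above) auto
  then show "sum f A \<le> c * real (card A)"
    using A card by (simp add: mult.commute)
qed

lemma finite_unavail [simp]: "finite (unavail S s)"
  by (simp add: unavail_def)

lemma cum_unavail_eq_card: "cum_unavail S t = card (SIGMA s:{1..t}. unavail S s)"
  by (simp add: cum_unavail_def card_SigmaI)

lemma cum_unavail_mono: "t \<le> t' \<Longrightarrow> cum_unavail S t \<le> cum_unavail S t'"
  unfolding cum_unavail_def by (rule sum_mono2) auto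

lemma lag_eq_sum_pairs:
  "lag nrm g S t = (\<Sum>s=1..t. (dual_norm nrm (g s))\<^sup>2)
     + 2 * (\<Sum>(s, q)\<in>(SIGMA s:{1..t}. unavail S s). dual_norm nrm (g s) * dual_norm nrm (g q))"
proof -
  have "lag nrm g S t = (\<Sum>s=1..t. (dual_norm nrm (g s))\<^sup>2)
      + 2 * (\<Sum>s=1..t. \<Sum>q\<in>unavail S s. dual_norm nrm (g s) * dual_norm nrm (g q))"
    by (simp add: lag_def sum.distrib sum_distrib_left mult.assoc)
  also have "(\<Sum>s=1..t. \<Sum>q\<in>unavail S s. dual_norm nrm (g s) * dual_norm nrm (g q))
      = (\<Sum>(s, q)\<in>(SIGMA s:{1..t}. unavail S s). dual_norm nrm (g s) * dual_norm nrm (g q))"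
    by (rule sum.Sigma) simp_all
  finally show ?thesis .
qed

lemma sum_subset_bounds:
  fixes f :: "'a \<Rightarrow> real"
  assumes "finite B" "A \<subseteq> B" "\<forall>y\<in>B. 0 \<le> f y" "\<forall>y\<in>B. f y \<le> c"
  shows "sum f A \<le> sum f B"
    and "sum f B \<le> sum f A + c * (real (card B) - real (card A))"
    and "sum f A \<le> c * real (card A)"
  using sum_inj_into_bounds[of B id A f c] assms by auto

locale arrival_order =
  fixes T :: nat and \<sigma> :: "nat \<Rightarrow> nat" and S :: "nat \<Rightarrow> nat set"
  assumes \<sigma>_bij: "bij_betw \<sigma> {1..T} {1..T}"
    and S_sub: "\<And>t. t \<in> {1..T} \<Longrightarrow> S t \<subseteq> {1..<t}"
    and S_prefix: "\<And>t. t \<in> {1..T} \<Longrightarrow> S t = \<sigma> ` {1..card (S t)}"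
begin

definition rank :: "nat \<Rightarrow> nat" where
  "rank = inv_into {1..T} \<sigma>"

lemma rank_\<sigma>: "k \<in> {1..T} \<Longrightarrow> rank (\<sigma> k) = k"
  unfolding rank_def using bij_betw_imp_inj_on[OF \<sigma>_bij] by (rule inv_into_f_f)

lemma \<sigma>_rank: "s \<in> {1..T} \<Longrightarrow> \<sigma> (rank s) = s"
  unfolding rank_def using bij_betw_imp_surj_on[OF \<sigma>_bij] by (metis f_inv_into_f)

lemma rank_mem: "s \<in> {1..T} \<Longrightarrow> rank s \<in> {1..T}"
  unfolding rank_def using bij_betw_imp_surj_on[OF \<sigma>_bij] by (metis inv_into_into)

lemma arrived_before_iff:
  assumes s: "s \<in> {1..T}"
  shows "q \<in> arrived_before T \<sigma> s \<longleftrightarrow> q \<in> {1..T} \<and> rank q < rank s"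
proof
  assume "q \<in> arrived_before T \<sigma> s"
  then obtain k where k: "q = \<sigma> k" "1 \<le> k" "k < rank s"
    unfolding arrived_before_def rank_def[symmetric] by auto
  moreover have "k \<in> {1..T}"
    using k rank_mem[OF s] by auto
  ultimately show "q \<in> {1..T} \<and> rank q < rank s"
    using bij_betw_apply[OF \<sigma>_bij] rank_\<sigma> by auto
next
  assume q: "q \<in> {1..T} \<and> rank q < rank s"
  then have "rank q \<in> {1..<rank s}"
    using rank_mem[of q] by auto
  then show "q \<in> arrived_before T \<sigma> s"
    unfolding arrived_before_def rank_def[symmetric] by (metis q image_eqI \<sigma>_rank)
qed

lemma mem_S_iff:
  assumes t: "t \<in> {1..T}" and s: "s \<in> {1..T}"
  shows "s \<in> S t \<longleftrightarrow> rank s \<le> card (S t)"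
proof
  assume "s \<in> S t"
  then obtain k where k: "s = \<sigma> k" "k \<in> {1..card (S t)}"
    using S_prefix[OF t] by blast
  moreover have "card (S t) \<le> T"
    using card_mono[OF _ S_sub[OF t]] t by (simp, arith)
  ultimately show "rank s \<le> card (S t)"
    using rank_\<sigma> by auto
next
  assume "rank s \<le> card (S t)"
  then have "\<sigma> (rank s) \<in> S t"
    using rank_mem[OF s] by (subst S_prefix[OF t]) auto
  then show "s \<in> S t"
    using \<sigma>_rank[OF s] by simp
qed

text \<open>The set \<open>B t\<close> of the paper, each pair ordered so that its second entry arrived first.\<close>

definition late_pairs :: "nat \<Rightarrow> (nat \<times> nat) set" where
  "late_pairs t = (SIGMA s:S t. arrived_before T \<sigma> s - S s)"

lemma late_pairsD:
  assumes sq: "(s, q) \<in> late_pairs t" and t: "t \<in> {1..T}"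
  shows "s \<in> S t" and "q \<in> S t" and "q \<notin> S s" and "rank q < rank s"
proof -
  show s: "s \<in> S t" and "q \<notin> S s"
    using sq by (simp_all add: late_pairs_def)
  then have "s \<in> {1..T}"
    using S_sub[OF t] t by auto
  moreover have "q \<in> arrived_before T \<sigma> s"
    using sq by (simp add: late_pairs_def)
  ultimately have q: "q \<in> {1..T}" and rank: "rank q < rank s"
    using arrived_before_iff by auto
  show "rank q < rank s"
    by (fact rank)
  have "rank s \<le> card (S t)"
    using mem_S_iff[OF t \<open>s \<in> {1..T}\<close>] s by simp
  then show "q \<in> S t"
    using mem_S_iff[OF t q] rank by simp
qed

lemma late_pairs_eqI:
  assumes "(s, q) \<in> late_pairs t" "(s', q') \<in> late_pairs t" "t \<in> {1..T}" and "{s, q} = {s', q'}"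
  shows "(s, q) = (s', q')"
  using late_pairsD(4)[OF assms(1,3)] late_pairsD(4)[OF assms(2,3)] assms(4)
  by (auto simp: doubleton_eq_iff)

lemma card_pairs_B:
  assumes t: "t \<in> {1..T}"
  shows "card (pairs_B T \<sigma> S t) = card (late_pairs t)"
proof -
  have "pairs_B T \<sigma> S t = (\<lambda>(s, q). {s, q}) ` late_pairs t"
    using late_pairsD(4)[OF _ t] by (fastforce simp: pairs_B_def late_pairs_def)
  moreover have "inj_on (\<lambda>(s, q). {s, q}) (late_pairs t)"
  proof (rule inj_onI)
    fix z z'
    assume "z \<in> late_pairs t" "z' \<in> late_pairs t" "(\<lambda>(s, q). {s, q}) z = (\<lambda>(s, q). {s, q}) z'"
    then show "z = z'"
      using late_pairs_eqI[OF _ _ t] by (cases z, cases z') simp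
  qed
  ultimately show ?thesis
    by (simp add: card_image)
qed

text \<open>Sorting a late pair \<open>(s, q)\<close> gives a pair in which the smaller timestamp was unavailable
  at the larger one: if \<open>s < q\<close> and \<open>s \<in> S q\<close>, then \<open>q\<close>, which arrived before \<open>s\<close>, would lie in
  \<open>S q\<close> as well.\<close>

lemma sorted_late_pair_unavail:
  assumes sq: "(s, q) \<in> late_pairs t" and t: "t \<in> {1..T}"
  shows "(max s q, min s q) \<in> (SIGMA s:{1..t}. unavail S s)"
proof -
  note pair = late_pairsD[OF sq t]
  have st: "s \<in> {1..<t}" "q \<in> {1..<t}"
    using pair(1,2) S_sub[OF t] by auto
  show ?thesis
  proof (cases "q < s")
    case True
    then show ?thesis
      using st pair(3) by (simp add: unavail_def)
  next
    case False
    then have "s < q"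
      using pair(4) by (cases "s = q") auto
    have qT: "q \<in> {1..T}" and sT: "s \<in> {1..T}"
      using st t by auto
    have "s \<notin> S q"
    proof
      assume "s \<in> S q"
      then have "q \<in> S q"
        using mem_S_iff[OF qT sT] mem_S_iff[OF qT qT] pair(4) by simp
      then show False
        using S_sub[OF qT] by auto
    qed
    then show ?thesis
      using st \<open>s < q\<close> by (simp add: unavail_def)
  qed
qed

lemma inj_on_sort_late_pairs:
  assumes t: "t \<in> {1..T}"
  shows "inj_on (\<lambda>(s, q). (max s q, min s q)) (late_pairs t)"
proof (rule inj_onI)
  fix z z'
  assume z: "z \<in> late_pairs t" and z': "z' \<in> late_pairs t"
    and eq: "(\<lambda>(s, q). (max s q, min s q)) z = (\<lambda>(s, q). (max s q, min s q)) z'"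
  obtain s q s' q' where [simp]: "z = (s, q)" "z' = (s', q')"
    by fastforce
  have "{s, q} = {max s q, min s q}" "{s', q'} = {max s' q', min s' q'}"
    by (auto simp: max_def min_def)
  then have "{s, q} = {s', q'}"
    using eq by simp
  then show "z = z'"
    using late_pairs_eqI z z' t by simp
qed

lemma late_pairs_sum_bounds:
  fixes a :: "nat \<Rightarrow> real"
  assumes a: "\<And>s. 0 \<le> a s" "\<forall>s\<in>{1..T}. a s \<le> c" and t: "t \<in> {1..T}"
  shows "(\<Sum>(s, q)\<in>late_pairs t. a s * a q) \<le> (\<Sum>(s, q)\<in>(SIGMA s:{1..t}. unavail S s). a s * a q)"
    and "(\<Sum>(s, q)\<in>(SIGMA s:{1..t}. unavail S s). a s * a q) \<le> (\<Sum>(s, q)\<in>late_pairs t. a s * a q)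
           + c\<^sup>2 * (real (card (SIGMA s:{1..t}. unavail S s)) - real (card (late_pairs t)))"
    and "(\<Sum>(s, q)\<in>late_pairs t. a s * a q) \<le> c\<^sup>2 * real (card (late_pairs t))"
    and "card (late_pairs t) \<le> card (SIGMA s:{1..t}. unavail S s)"
proof -
  define P where "P = (SIGMA s:{1..t}. unavail S s)"
  define f where "f = (\<lambda>(s, q). a s * a q)"
  have c: "0 \<le> c"
    using a(1)[of t] bspec[OF a(2) t] by linarith
  have f: "\<forall>z\<in>P. 0 \<le> f z" "\<forall>z\<in>P. f z \<le> c\<^sup>2"
  proof (safe)
    fix s q
    assume "(s, q) \<in> P"
    then have "s \<in> {1..T}" "q \<in> {1..T}"
      using t by (auto simp: P_def unavail_def)
    then show "0 \<le> f (s, q)" "f (s, q) \<le> c\<^sup>2"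
      using a c by (auto simp: f_def power2_eq_square intro: mult_mono)
  qed
  have P: "finite P"
    by (simp add: P_def)
  have into: "(\<lambda>(s, q). (max s q, min s q)) ` late_pairs t \<subseteq> P"
  proof
    fix y
    assume "y \<in> (\<lambda>(s, q). (max s q, min s q)) ` late_pairs t"
    then obtain s q where "(s, q) \<in> late_pairs t" "y = (max s q, min s q)"
      by auto
    then show "y \<in> P"
      unfolding P_def using sorted_late_pair_unavail[OF _ t] by blast
  qed
  have f_sort: "f ((\<lambda>(s, q). (max s q, min s q)) z) = f z" for z
    by (cases z) (simp add: f_def max_def min_def)
  note bounds = sum_inj_into_bounds[of P "\<lambda>(s, q). (max s q, min s q)" "late_pairs t" f "c\<^sup>2",
      OF P inj_on_sort_late_pairs[OF t] into f_sort f, unfolded f_def P_def]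
  show "(\<Sum>(s, q)\<in>late_pairs t. a s * a q) \<le> (\<Sum>(s, q)\<in>(SIGMA s:{1..t}. unavail S s). a s * a q)"
    by (fact bounds(1))
  show "(\<Sum>(s, q)\<in>(SIGMA s:{1..t}. unavail S s). a s * a q) \<le> (\<Sum>(s, q)\<in>late_pairs t. a s * a q)
      + c\<^sup>2 * (real (card (SIGMA s:{1..t}. unavail S s)) - real (card (late_pairs t)))"
    by (fact bounds(2))
  show "(\<Sum>(s, q)\<in>late_pairs t. a s * a q) \<le> c\<^sup>2 * real (card (late_pairs t))"
    by (fact bounds(3))
  show "card (late_pairs t) \<le> card (SIGMA s:{1..t}. unavail S s)"
    using card_inj_on_le[OF inj_on_sort_late_pairs[OF t] into P] by (simp add: P_def)
qed

lemma lag_tilde_eq_sum_pairs: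
  assumes t: "t \<in> {1..T}"
  shows "lag_tilde T \<sigma> nrm g S t = (\<Sum>s\<in>S t. (dual_norm nrm (g s))\<^sup>2)
     + 2 * (\<Sum>(s, q)\<in>late_pairs t. dual_norm nrm (g s) * dual_norm nrm (g q))"
proof -
  have "lag_tilde T \<sigma> nrm g S t = (\<Sum>s\<in>S t. (dual_norm nrm (g s))\<^sup>2)
      + 2 * (\<Sum>s\<in>S t. \<Sum>q\<in>arrived_before T \<sigma> s - S s. dual_norm nrm (g s) * dual_norm nrm (g q))"
    by (simp add: lag_tilde_def sum.distrib sum_distrib_left mult.assoc)
  also have "(\<Sum>s\<in>S t. \<Sum>q\<in>arrived_before T \<sigma> s - S s. dual_norm nrm (g s) * dual_norm nrm (g q))
      = (\<Sum>(s, q)\<in>late_pairs t. dual_norm nrm (g s) * dual_norm nrm (g q))"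
    unfolding late_pairs_def
    by (rule sum.Sigma) (simp_all add: finite_subset[OF S_sub[OF t]] arrived_before_def)
  finally show ?thesis .
qed

lemma nu_eq_card:
  "t \<in> {1..T} \<Longrightarrow> nu T \<sigma> S t = real t + 2 * real (card (SIGMA s:{1..t}. unavail S s))
     - real (card (S t)) - 2 * real (card (late_pairs t))"
  by (simp add: nu_def card_pairs_B cum_unavail_eq_card)

lemma lag_bounds:
  fixes nrm :: "'a::euclidean_space \<Rightarrow> real" and g :: "nat \<Rightarrow> 'a"
  assumes N: "is_norm nrm" and G: "\<And>s. s \<in> {1..T} \<Longrightarrow> dual_norm nrm (g s) \<le> G"
    and t: "t \<in> {1..T}"
  shows lag_tilde_le_lag: "lag_tilde T \<sigma> nrm g S t \<le> lag nrm g S t"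
    and lag_le_lag_tilde_nu: "lag nrm g S t \<le> lag_tilde T \<sigma> nrm g S t + G\<^sup>2 * nu T \<sigma> S t"
    and sq_le_lag_tilde_nu: "G\<^sup>2 \<le> lag_tilde T \<sigma> nrm g S t + G\<^sup>2 * nu T \<sigma> S t"
    and lag_tilde_nu_le: "lag_tilde T \<sigma> nrm g S t + G\<^sup>2 * nu T \<sigma> S t
                            \<le> G\<^sup>2 * (real t + 2 * real (cum_unavail S t))"
proof -
  define a where "a s = dual_norm nrm (g s)" for s
  define P where "P = (SIGMA s:{1..t}. unavail S s)"
  define D where "D = late_pairs t"
  have a: "0 \<le> a s" for s
    by (simp add: a_def dual_norm_nonneg[OF N])
  have a_le: "\<forall>s\<in>{1..T}. a s \<le> G"
    using G by (simp add: a_def)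
  note pairs = late_pairs_sum_bounds[OF a a_le t, folded P_def D_def]
  have a_sq: "\<forall>s\<in>{1..t}. (a s)\<^sup>2 \<le> G\<^sup>2"
    using t a a_le by (auto intro: power_mono)
  have sq_nonneg: "\<forall>s\<in>{1..t}. 0 \<le> (a s)\<^sup>2"
    by simp
  have S_t: "S t \<subseteq> {1..t}"
    using S_sub[OF t] by auto
  note squares = sum_subset_bounds[of "{1..t}" "S t" "\<lambda>s. (a s)\<^sup>2" "G\<^sup>2",
      OF finite_atLeastAtMost S_t sq_nonneg a_sq, unfolded card_atLeastAtMost diff_Suc_1]
  have lag_tilde: "lag_tilde T \<sigma> nrm g S t = (\<Sum>s\<in>S t. (a s)\<^sup>2) + 2 * (\<Sum>(s, q)\<in>D. a s * a q)"
    unfolding a_def D_def by (rule lag_tilde_eq_sum_pairs[OF t])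
  have lag: "lag nrm g S t = (\<Sum>s=1..t. (a s)\<^sup>2) + 2 * (\<Sum>(s, q)\<in>P. a s * a q)"
    unfolding a_def P_def by (rule lag_eq_sum_pairs)
  have nu: "G\<^sup>2 * nu T \<sigma> S t = G\<^sup>2 * (real t - real (card (S t)))
      + 2 * (G\<^sup>2 * (real (card P) - real (card D)))"
    unfolding nu_eq_card[OF t] P_def D_def by (simp add: algebra_simps)
  have "card (S t) + 1 \<le> t"
    using card_mono[OF _ S_sub[OF t]] t by (simp, arith)
  then have card_S: "real (card (S t)) + 1 \<le> real t"
    by (metis of_nat_1 of_nat_add of_nat_le_iff)
  have lag_tilde_nonneg: "0 \<le> lag_tilde T \<sigma> nrm g S t"
    unfolding lag_tilde_def
    by (intro sum_nonneg add_nonneg_nonneg mult_nonneg_nonneg) (simp_all add: dual_norm_nonneg[OF N] sum_nonneg)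
  show "lag_tilde T \<sigma> nrm g S t \<le> lag nrm g S t"
    unfolding lag_tilde lag using squares(1) pairs(1) by linarith
  show "lag nrm g S t \<le> lag_tilde T \<sigma> nrm g S t + G\<^sup>2 * nu T \<sigma> S t"
    unfolding lag_tilde lag nu using squares(2) pairs(2) by linarith
  have "1 \<le> nu T \<sigma> S t"
    using card_S pairs(4) unfolding nu_eq_card[OF t] P_def[symmetric] D_def[symmetric] by simp
  then have "G\<^sup>2 * 1 \<le> G\<^sup>2 * nu T \<sigma> S t"
    by (rule mult_left_mono) simp
  then show "G\<^sup>2 \<le> lag_tilde T \<sigma> nrm g S t + G\<^sup>2 * nu T \<sigma> S t"
    using lag_tilde_nonneg by simp
  have "G\<^sup>2 * (real t - real (card (S t))) + 2 * (G\<^sup>2 * (real (card P) - real (card D)))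
      + G\<^sup>2 * real (card (S t)) + 2 * (G\<^sup>2 * real (card D))
      = G\<^sup>2 * (real t + 2 * real (cum_unavail S t))"
    by (simp add: P_def cum_unavail_eq_card algebra_simps)
  then show "lag_tilde T \<sigma> nrm g S t + G\<^sup>2 * nu T \<sigma> S t \<le> G\<^sup>2 * (real t + 2 * real (cum_unavail S t))"
    unfolding lag_tilde nu using squares(3) pairs(3) by linarith
qed

lemma max_sqrt_lag_tilde_le:
  fixes nrm :: "'a::euclidean_space \<Rightarrow> real" and g :: "nat \<Rightarrow> 'a"
  assumes N: "is_norm nrm" and G: "\<And>s. s \<in> {1..T} \<Longrightarrow> dual_norm nrm (g s) \<le> G" and T: "1 \<le> T"
  shows "(MAX t\<in>{1..T}. sqrt (lag_tilde T \<sigma> nrm g S t + G\<^sup>2 * nu T \<sigma> S t))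
    \<le> min (MAX t\<in>{1..T}. sqrt (lag nrm g S t + G\<^sup>2 * nu T \<sigma> S t))
          (G * sqrt (real T + 2 * real (cum_unavail S T)))"
proof -
  have G0: "0 \<le> G"
    using G[of 1] dual_norm_nonneg[OF N, of "g 1"] T by simp
  have "sqrt (lag_tilde T \<sigma> nrm g S t + G\<^sup>2 * nu T \<sigma> S t)
      \<le> (MAX t\<in>{1..T}. sqrt (lag nrm g S t + G\<^sup>2 * nu T \<sigma> S t))" if t: "t \<in> {1..T}" for t
  proof -
    have "sqrt (lag_tilde T \<sigma> nrm g S t + G\<^sup>2 * nu T \<sigma> S t) \<le> sqrt (lag nrm g S t + G\<^sup>2 * nu T \<sigma> S t)"
      using lag_tilde_le_lag[OF N G t] by simp
    also have "\<dots> \<le> (MAX t\<in>{1..T}. sqrt (lag nrm g S t + G\<^sup>2 * nu T \<sigma> S t))"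
      using t by (intro Max_ge) auto
    finally show ?thesis .
  qed
  moreover have "sqrt (lag_tilde T \<sigma> nrm g S t + G\<^sup>2 * nu T \<sigma> S t)
      \<le> G * sqrt (real T + 2 * real (cum_unavail S T))" if t: "t \<in> {1..T}" for t
  proof -
    have "lag_tilde T \<sigma> nrm g S t + G\<^sup>2 * nu T \<sigma> S t \<le> G\<^sup>2 * (real t + 2 * real (cum_unavail S t))"
      by (rule lag_tilde_nu_le[OF N G t])
    also have "\<dots> \<le> G\<^sup>2 * (real T + 2 * real (cum_unavail S T))"
      using t cum_unavail_mono[of t T S] by (intro mult_left_mono) auto
    finally have "sqrt (lag_tilde T \<sigma> nrm g S t + G\<^sup>2 * nu T \<sigma> S t)
        \<le> sqrt (G\<^sup>2 * (real T + 2 * real (cum_unavail S T)))"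
      by (rule real_sqrt_le_mono)
    also have "\<dots> = G * sqrt (real T + 2 * real (cum_unavail S T))"
      using G0 by (simp add: real_sqrt_mult)
    finally show ?thesis .
  qed
  ultimately show ?thesis
    using T by (simp add: Max_le_iff)
qed

end

theorem proposition3:
  fixes nrm :: "'a::euclidean_space \<Rightarrow> real"
    and X :: "'a set"
    and h :: "'a \<Rightarrow> ereal"
    and T :: nat
    and agent :: "nat \<Rightarrow> 'ag"
    and Sa :: "'ag \<Rightarrow> nat \<Rightarrow> nat set"
    and S :: "nat \<Rightarrow> nat set"
    and f :: "nat \<Rightarrow> 'a \<Rightarrow> ereal"
    and x g :: "nat \<Rightarrow> 'a"
    and \<sigma> :: "nat \<Rightarrow> nat"
    and \<eta> :: "nat \<Rightarrow> ereal"
    and G r :: real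
    and p :: 'a
  assumes norm: "is_norm nrm"
    and X_closed: "closed X" and X_convex: "convex X"
    and h_lsc: "lower_semicont h"
    and h_sc: "strongly_convex_on nrm X h"
    and h_dom: "\<forall>y\<in>X. h y \<noteq> \<infinity>"
    and h_sel: "has_continuous_subgrad_selection h"
    and h_nonneg: "\<forall>y. 0 \<le> h y"
    and T_pos: "1 \<le> T"
    and Sa_sub: "\<forall>a t. Sa a t \<subseteq> {1..<t}"
    and Sa_mono: "\<forall>a t t'. t \<le> t' \<longrightarrow> Sa a t \<subseteq> Sa a t'"
    and S_def: "\<forall>t\<in>{1..T}. S t = Sa (agent t) t"
    and S_incr: "\<forall>t. 1 \<le> t \<and> t < T \<longrightarrow> S t \<subseteq> S (Suc t)"
    and \<sigma>_perm: "bij_betw \<sigma> {1..T} {1..T}"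
    and \<sigma>_order: "\<forall>t\<in>{1..T}. S t = \<sigma> ` {1..card (S t)}"
    and f_conv: "\<forall>t\<in>{1..T}. proper_convex (f t)"
    and f_dom: "\<forall>t\<in>{1..T}. \<forall>y\<in>X. subdiff (f t) y \<noteq> {}"
    and g_sub: "\<forall>t\<in>{1..T}. g t \<in> subdiff (f t) (x t)"
    and g_bound: "\<forall>t\<in>{1..T}. dual_norm nrm (g t) \<le> G"
    and r_pos: "0 < r"
    and \<eta>_0: "\<eta> 0 = \<infinity>"
    and \<eta>_rec: "\<forall>t\<in>{1..T}. \<eta> t = min (\<eta> (t - 1))
        (let q = lag_tilde T \<sigma> nrm g S t + G\<^sup>2 * nu T \<sigma> S t
         in if q = 0 then \<infinity> else ereal (r / sqrt q))"
    and dda: "\<forall>t\<in>{1..T}. x t \<in> X \<and>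
        (\<forall>y\<in>X. ereal (\<Sum>s\<in>S t. g s \<bullet> x t) + h (x t) / \<eta> t
                 \<le> ereal (\<Sum>s\<in>S t. g s \<bullet> y) + h y / \<eta> t)"
    and p_X: "p \<in> X"
    and p_h: "h p \<le> ereal (r\<^sup>2)"
  shows "(\<Sum>t=1..T. real_of_ereal (f t (x t)) - real_of_ereal (f t p))
           \<le> 2 * r * (MAX t\<in>{1..T}. sqrt (lag_tilde T \<sigma> nrm g S t + G\<^sup>2 * nu T \<sigma> S t))
       \<and> 2 * r * (MAX t\<in>{1..T}. sqrt (lag_tilde T \<sigma> nrm g S t + G\<^sup>2 * nu T \<sigma> S t))
           \<le> 2 * r * min (MAX t\<in>{1..T}. sqrt (lag nrm g S t + G\<^sup>2 * nu T \<sigma> S t))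
                         (G * sqrt (real T + 2 * real (cum_unavail S T)))"
proof -
  define q where "q t = lag_tilde T \<sigma> nrm g S t + G\<^sup>2 * nu T \<sigma> S t" for t
  have S_sub: "\<And>t. t \<in> {1..T} \<Longrightarrow> S t \<subseteq> {1..<t}"
    using S_def Sa_sub by auto
  interpret arrival_order T \<sigma> S
    using \<sigma>_perm S_sub \<sigma>_order by unfold_locales auto
  have G: "\<And>t. t \<in> {1..T} \<Longrightarrow> dual_norm nrm (g t) \<le> G"
    using g_bound by blast
  have q_ge: "G\<^sup>2 \<le> q t" and lag_le: "lag nrm g S t \<le> q t" if "t \<in> {1..T}" for t
    using sq_le_lag_tilde_nu[OF norm G that] lag_le_lag_tilde_nu[OF norm G that] by (simp_all add: q_def)
  have "(\<Sum>t=1..T. real_of_ereal (f t (x t)) - real_of_ereal (f t p)) \<le> (\<Sum>t=1..T. g t \<bullet> (x t - p))"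
    using f_conv g_sub f_dom p_X by (intro sum_mono real_of_ereal_diff_le_inner_subgradient) auto
  also have "\<dots> \<le> 2 * r * (MAX t\<in>{1..T}. sqrt (q t))"
  proof (cases "G = 0")
    case True
    then have "(\<Sum>t=1..T. g t \<bullet> (x t - p)) \<le> 0"
      using G by (intro sum_nonpos inner_nonpos_of_dual_norm_nonpos[OF norm]) auto
    moreover have "0 \<le> 2 * r * (MAX t\<in>{1..T}. sqrt (q t))"
    proof -
      have "0 \<le> sqrt (q T)"
        using order_trans[OF zero_le_power2 q_ge[of T]] T_pos by simp
      also have "\<dots> \<le> (MAX t\<in>{1..T}. sqrt (q t))"
        using T_pos by (intro Max_ge) auto
      finally show ?thesis
        using r_pos by simp
    qed
    ultimately show ?thesis
      by linarith
  next
    case False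
    then have "0 < G\<^sup>2"
      by simp
    then have q_pos: "0 < q t" if "t \<in> {1..T}" for t
      using q_ge[OF that] by linarith
    have \<eta>_rec': "\<eta> t = min (\<eta> (t - 1)) (ereal (r / sqrt (q t)))" if "t \<in> {1..T}" for t
      using \<eta>_rec q_pos[OF that] that unfolding q_def by (auto simp: Let_def)
    show ?thesis
      using h_dom h_nonneg
      by (intro delayed_dda_adaptive_regret_ereal[where S = S and q = q and \<eta> = \<eta>,
            OF norm X_convex h_sc _ _ T_pos S_sub q_pos lag_le r_pos \<eta>_0 \<eta>_rec' dda[rule_format] p_X p_h]) auto
  qed
  finally show ?thesis
    using max_sqrt_lag_tilde_le[OF norm G T_pos] r_pos unfolding q_def by (auto intro: mult_left_mono)
qed

end
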